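(* Let $n,m$ be positive integers with $m+2\le n$, and let $\tilde{\mathcal I}$ be the family of non-empty independent sets $I$ of $P_n^m$ with $\min I\leq m+1$ and $\max I\geq n-m$. For every $I\in\tilde{\mathcal I}$, $\gamma_{gr}(P_n^m,I)=\max I-\min I+1-(|I|-1)m$. Moreover, for every non-empty independent set $I$ of $P_n^m$ there exists $I'\in\tilde{\mathcal I}$ such that $\gamma_{gr}(P_n^m,I)\leq\gamma_{gr}(P_n^m,I')$.
   Context: $P_n^m$ is the $m$-th power of the path $P_n$: vertex set $[n]=\{1,\dots,n\}$, distinct $i,j$ adjacent iff $|i-j|\le m$. For a sequence $S=(v_1,\dots,v_k)$ of distinct vertices, $PN_S(v_i)=N[v_i]\setminus\bigcup_{j<i}N[v_j]$ ($N[\cdot]$ the closed neighborhood). $S$ is a legal dominating sequence if $\{v_1,\dots,v_k\}$ is dominating and each $PN_S(v_i)\ne\emptyset$. For such $S$ the footprinter $f_S(x)$ of a vertex $x$ is the unique $v_i$ with $x\in PN_S(v_i)$, and $I_S=\{v:f_S(v)=v\}$. For an independent set $I$, $\gamma_{gr}(G,I)$ is the maximum length of a legal dominating sequence $S$ of $G$ with $I_S=I$ ($-\infty$ if there is none). *)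

theory Defs
  imports Complex_Main "HOL-Library.Extended_Real"
begin

text \<open>A simple graph is given by a vertex set V and a symmetric irreflexive adjacency relation adj.\<close>

definition path_pow_V :: "nat \<Rightarrow> nat set" where
  "path_pow_V n = {1..n}"

definition path_pow_adj :: "nat \<Rightarrow> nat \<Rightarrow> nat \<Rightarrow> nat \<Rightarrow> bool" where
  "path_pow_adj n m i j \<longleftrightarrow> i \<in> {1..n} \<and> j \<in> {1..n} \<and> i \<noteq> j \<and>
     (if i \<le> j then j - i else i - j) \<le> m"

definition closed_nbhd :: "'a set \<Rightarrow> ('a \<Rightarrow> 'a \<Rightarrow> bool) \<Rightarrow> 'a \<Rightarrow> 'a set" where
  "closed_nbhd V adj v = {u \<in> V. u = v \<or> adj v u}"

definition PN :: "'a set \<Rightarrow> ('a \<Rightarrow> 'a \<Rightarrow> bool) \<Rightarrow> 'a list \<Rightarrow> nat \<Rightarrow> 'a set" where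
  "PN V adj S i = closed_nbhd V adj (S ! i) - (\<Union>j<i. closed_nbhd V adj (S ! j))"

definition dominating :: "'a set \<Rightarrow> ('a \<Rightarrow> 'a \<Rightarrow> bool) \<Rightarrow> 'a set \<Rightarrow> bool" where
  "dominating V adj D \<longleftrightarrow> D \<subseteq> V \<and> (\<forall>x\<in>V. \<exists>d\<in>D. x \<in> closed_nbhd V adj d)"

definition legal_dom_seq :: "'a set \<Rightarrow> ('a \<Rightarrow> 'a \<Rightarrow> bool) \<Rightarrow> 'a list \<Rightarrow> bool" where
  "legal_dom_seq V adj S \<longleftrightarrow> distinct S \<and> dominating V adj (set S) \<and>
     (\<forall>i<length S. PN V adj S i \<noteq> {})"

definition footprinter :: "'a set \<Rightarrow> ('a \<Rightarrow> 'a \<Rightarrow> bool) \<Rightarrow> 'a list \<Rightarrow> 'a \<Rightarrow> 'a" where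
  "footprinter V adj S x = S ! (THE i. i < length S \<and> x \<in> PN V adj S i)"

definition I_seq :: "'a set \<Rightarrow> ('a \<Rightarrow> 'a \<Rightarrow> bool) \<Rightarrow> 'a list \<Rightarrow> 'a set" where
  "I_seq V adj S = {v \<in> V. footprinter V adj S v = v}"

definition independent :: "'a set \<Rightarrow> ('a \<Rightarrow> 'a \<Rightarrow> bool) \<Rightarrow> 'a set \<Rightarrow> bool" where
  "independent V adj I \<longleftrightarrow> I \<subseteq> V \<and> (\<forall>u\<in>I. \<forall>v\<in>I. \<not> adj u v)"

text \<open>gamma_gr(G, I): maximum length of a legal dominating sequence S with I_S = I;
  the supremum of the empty set in ereal is -\<infinity>.\<close>
definition gamma_gr :: "'a set \<Rightarrow> ('a \<Rightarrow> 'a \<Rightarrow> bool) \<Rightarrow> 'a set \<Rightarrow> ereal" where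
  "gamma_gr V adj I = Sup {ereal (real (length S)) | S. legal_dom_seq V adj S \<and> I_seq V adj S = I}"

end

theory Submission
  imports Defs
begin

text \<open>
  Upper bound: let S be a legal dominating sequence of P_n^m with I_S = I. Vertices left of
  min I are footprinted by min I and vertices right of max I by max I. Between two consecutive
  vertices a < b of I, whichever of a and b is played first footprints the m vertices of the gap
  next to it, since before that no played vertex reaches into the gap. Each vertex of S outside I
  footprints at least one of the remaining vertices of [min I, max I] outside I, which gives
  |S| <= max I - min I + 1 - (|I| - 1) m.

  Lower bound: playing in increasing order those vertices of [min I, max I] that have no vertex
  of I among their m right neighbours gives a legal sequence of exactly this length whose
  self-footprinted vertices are I.

  For the second claim, the first vertex of any legal sequence footprints at least m + 1
  vertices, so gamma_gr(P_n^m, I) <= n - m for every I, and I = {1, n} attains n - m.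
\<close>

section \<open>Legal dominating sequences\<close>

lemma PN_iff:
  "x \<in> PN V adj S i \<longleftrightarrow> x \<in> closed_nbhd V adj (S!i) \<and> (\<forall>j<i. x \<notin> closed_nbhd V adj (S!j))"
  by (auto simp: PN_def)

lemma closed_nbhd_subset: "closed_nbhd V adj v \<subseteq> V"
  by (auto simp: closed_nbhd_def)

lemma footprinter_eqI:
  assumes "i < length S" "x \<in> PN V adj S i"
  shows "footprinter V adj S x = S!i"
proof -
  have "(THE i'. i' < length S \<and> x \<in> PN V adj S i') = i"
  proof (rule the_equality)
    fix i' assume "i' < length S \<and> x \<in> PN V adj S i'"
    with assms show "i' = i" by (metis PN_iff linorder_neqE_nat)
  qed (use assms in simp)
  then show ?thesis by (simp add: footprinter_def)
qed

lemma dominating_obtains_PN: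
  assumes "dominating V adj (set S)" "x \<in> V"
  obtains i where "i < length S" "x \<in> PN V adj S i"
proof -
  obtain k where k: "k < length S" "x \<in> closed_nbhd V adj (S!k)"
    using assms unfolding dominating_def by (metis in_set_conv_nth)
  define i where "i = (LEAST i. x \<in> closed_nbhd V adj (S!i))"
  have "x \<in> PN V adj S i"
    unfolding PN_iff i_def using k(2) by (metis LeastI not_less_Least)
  moreover have "i \<le> k"
    unfolding i_def using k(2) by (rule Least_le)
  ultimately show ?thesis using k(1) that[of i] by simp
qed

lemma I_seq_iff:
  assumes "legal_dom_seq V adj S"
  shows "v \<in> I_seq V adj S \<longleftrightarrow> (\<exists>i<length S. S!i = v \<and> (\<forall>j<i. v \<notin> closed_nbhd V adj (S!j)))"
proof
  assume v: "v \<in> I_seq V adj S"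
  then have "v \<in> V" by (simp add: I_seq_def)
  moreover have "dominating V adj (set S)"
    using assms by (simp add: legal_dom_seq_def)
  ultimately obtain i where "i < length S" "v \<in> PN V adj S i"
    using dominating_obtains_PN by metis
  with v show "\<exists>i<length S. S!i = v \<and> (\<forall>j<i. v \<notin> closed_nbhd V adj (S!j))"
    by (auto simp: I_seq_def footprinter_eqI PN_iff)
next
  assume "\<exists>i<length S. S!i = v \<and> (\<forall>j<i. v \<notin> closed_nbhd V adj (S!j))"
  then obtain i where i: "i < length S" "S!i = v" "\<forall>j<i. v \<notin> closed_nbhd V adj (S!j)"
    by blast
  then have "v \<in> V"
    using assms nth_mem by (fastforce simp: legal_dom_seq_def dominating_def)
  with i have "v \<in> PN V adj S i"
    by (simp add: PN_iff closed_nbhd_def)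
  with i \<open>v \<in> V\<close> show "v \<in> I_seq V adj S"
    by (simp add: I_seq_def footprinter_eqI)
qed

lemma I_seq_obtains_index:
  assumes legal: "legal_dom_seq V adj S" and a: "a \<in> I_seq V adj S"
  obtains i where "i < length S" "S!i = a" "\<forall>j<i. S!j \<noteq> a"
proof -
  obtain i where i: "i < length S" "S!i = a" "\<forall>j<i. a \<notin> closed_nbhd V adj (S!j)"
    using a unfolding I_seq_iff[OF legal] by blast
  moreover have "a \<in> V" using a by (simp add: I_seq_def)
  ultimately have "\<forall>j<i. S!j \<noteq> a" by (auto simp: closed_nbhd_def)
  with i that show thesis by blast
qed

lemma I_seq_independent:
  assumes legal: "legal_dom_seq V adj S"
    and sym: "\<And>u v. adj u v \<Longrightarrow> adj v u" and irrefl: "\<And>v. \<not> adj v v"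
  shows "independent V adj (I_seq V adj S)"
proof -
  have not_adj: "\<not> adj (S!i) (S!k)"
    if "i < k" "\<forall>j<k. S!k \<notin> closed_nbhd V adj (S!j)" "S!k \<in> V" for i k
    using that by (auto simp: closed_nbhd_def)
  have "\<not> adj u v" if u: "u \<in> I_seq V adj S" and v: "v \<in> I_seq V adj S" for u v
  proof -
    obtain i where i: "i < length S" "S!i = u" "\<forall>j<i. u \<notin> closed_nbhd V adj (S!j)"
      using u unfolding I_seq_iff[OF legal] by blast
    obtain k where k: "k < length S" "S!k = v" "\<forall>j<k. v \<notin> closed_nbhd V adj (S!j)"
      using v unfolding I_seq_iff[OF legal] by blast
    have "u \<in> V" "v \<in> V" using u v by (auto simp: I_seq_def)
    consider "i < k" | "i = k" | "k < i" by linarith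
    then show ?thesis
    proof cases
      case 1 then show ?thesis using not_adj[of i k] i(2) k(2,3) \<open>v \<in> V\<close> by simp
    next
      case 2 then show ?thesis using i(2) k(2) irrefl by simp
    next
      case 3 then show ?thesis using not_adj[of k i] k(2) i(2,3) \<open>u \<in> V\<close> sym by auto
    qed
  qed
  then show ?thesis by (auto simp: independent_def I_seq_def)
qed

text \<open>
  The vertices of T guard A. Guards belong to I_S, so none of them is dominated before it is
  played; hence, up to the first guard played, no vertex reaches A, and the first guard
  footprints every vertex of A in its neighbourhood.
\<close>
lemma footprinter_guarded:
  assumes legal: "legal_dom_seq V adj S"
    and T: "T \<subseteq> I_seq V adj S" and A: "A \<inter> I_seq V adj S = {}"
    and guard: "\<And>v y. v \<in> V \<Longrightarrow> v \<notin> A \<Longrightarrow> y \<in> A \<Longrightarrow> y \<in> closed_nbhd V adj v \<Longrightarrow>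
                  \<exists>t\<in>T. t \<in> closed_nbhd V adj v"
    and i: "i < length S" "S!i \<in> T" "\<forall>j<i. S!j \<notin> T"
    and x: "x \<in> A" "x \<in> closed_nbhd V adj (S!i)"
  shows "footprinter V adj S x = S!i"
proof -
  have SV: "S!j \<in> V" if "j < length S" for j
    using legal that nth_mem by (fastforce simp: legal_dom_seq_def dominating_def)
  have "\<forall>y\<in>A. y \<notin> closed_nbhd V adj (S!j)" if "j < i" for j
    using that
  proof (induction j rule: less_induct)
    case (less j)
    show ?case
    proof (intro ballI notI)
      fix y assume y: "y \<in> A" "y \<in> closed_nbhd V adj (S!j)"
      show False
      proof (cases "S!j \<in> A")
        case True
        then have "S!j \<notin> I_seq V adj S" using A by blast
        moreover have "j < length S" using less.prems i(1) by simp
        ultimately obtain j' where "j' < j" "S!j \<in> closed_nbhd V adj (S!j')"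
          unfolding I_seq_iff[OF legal] by blast
        then show False using less.IH less.prems True by fastforce
      next
        case False
        moreover have "S!j \<in> V" using SV less.prems i(1) by simp
        ultimately obtain t where t: "t \<in> T" "t \<in> closed_nbhd V adj (S!j)"
          using guard y by blast
        then have "t \<in> I_seq V adj S" using T by blast
        then obtain k where k: "k < length S" "S!k = t" "\<forall>j<k. t \<notin> closed_nbhd V adj (S!j)"
          unfolding I_seq_iff[OF legal] by blast
        have "i \<le> k" using i(3) k(2) t(1) not_le by blast
        then show False using k(3) t(2) less.prems by simp
      qed
    qed
  qed
  then have "x \<in> PN V adj S i" using x by (auto simp: PN_iff)
  then show ?thesis using i(1) by (rule footprinter_eqI[rotated])
qed

lemma footprinter_image:
  assumes "legal_dom_seq V adj S"
  shows "footprinter V adj S ` V = set S"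
proof
  show "footprinter V adj S ` V \<subseteq> set S"
  proof
    fix v assume "v \<in> footprinter V adj S ` V"
    then obtain x where x: "x \<in> V" "v = footprinter V adj S x" by blast
    moreover have "dominating V adj (set S)"
      using assms by (simp add: legal_dom_seq_def)
    ultimately obtain i where "i < length S" "x \<in> PN V adj S i"
      using dominating_obtains_PN by metis
    then show "v \<in> set S" using x by (simp add: footprinter_eqI)
  qed
  show "set S \<subseteq> footprinter V adj S ` V"
  proof
    fix v assume "v \<in> set S"
    then obtain i where i: "i < length S" "S!i = v" by (auto simp: in_set_conv_nth)
    then obtain x where "x \<in> PN V adj S i"
      using assms by (auto simp: legal_dom_seq_def)
    moreover from this have "x \<in> V"
      using closed_nbhd_subset by (fastforce simp: PN_iff)
    ultimately show "v \<in> footprinter V adj S ` V"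
      using i by (metis footprinter_eqI image_eqI)
  qed
qed

lemma length_le_card_I_seq_add:
  assumes legal: "legal_dom_seq V adj S" and "finite V"
  shows "length S \<le> card (I_seq V adj S) + card {x \<in> V. footprinter V adj S x \<notin> I_seq V adj S}"
    (is "_ \<le> card ?I + card ?B")
proof -
  let ?fp = "footprinter V adj S"
  have "set S \<subseteq> ?I \<union> ?fp ` ?B"
  proof
    fix v assume "v \<in> set S"
    then obtain x where "x \<in> V" "v = ?fp x"
      using footprinter_image[OF legal] by (metis imageE)
    then show "v \<in> ?I \<union> ?fp ` ?B" by blast
  qed
  moreover have "finite ?I"
    using assms(2) by (auto simp: I_seq_def)
  ultimately have "card (set S) \<le> card (?I \<union> ?fp ` ?B)"
    using assms(2) by (intro card_mono) auto
  also have "\<dots> \<le> card ?I + card (?fp ` ?B)"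
    by (rule card_Un_le)
  also have "card (?fp ` ?B) \<le> card ?B" by (rule card_image_le) (use assms(2) in simp)
  finally show ?thesis
    using legal by (simp add: legal_dom_seq_def distinct_card)
qed

lemma length_add_card_first_nbhd_le:
  assumes legal: "legal_dom_seq V adj S" and "finite V" and "S \<noteq> []"
  shows "length S + card (closed_nbhd V adj (S!0)) \<le> card V + 1"
proof -
  let ?fp = "footprinter V adj S" and ?N = "closed_nbhd V adj (S!0)"
  have first: "?fp x = S!0" if "x \<in> ?N" for x
    using that assms(3) by (intro footprinter_eqI) (auto simp: PN_iff)
  have "set S \<subseteq> insert (S!0) (?fp ` (V - ?N))"
  proof
    fix v assume "v \<in> set S"
    then obtain x where "x \<in> V" "v = ?fp x"
      using footprinter_image[OF legal] by (metis imageE)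
    then show "v \<in> insert (S!0) (?fp ` (V - ?N))"
      using first by (cases "x \<in> ?N") auto
  qed
  then have "card (set S) \<le> card (insert (S!0) (?fp ` (V - ?N)))"
    using assms(2) by (intro card_mono) auto
  also have "\<dots> \<le> card (?fp ` (V - ?N)) + 1"
    using assms(2) by (simp add: card_insert_if)
  also have "\<dots> \<le> card (V - ?N) + 1"
    using assms(2) by (simp add: card_image_le)
  also have "\<dots> = card V - card ?N + 1"
    using assms(2)
    by (simp add: card_Diff_subset closed_nbhd_subset finite_subset[OF closed_nbhd_subset])
  finally have "length S \<le> card V - card ?N + 1"
    using legal by (simp add: legal_dom_seq_def distinct_card)
  moreover have "card ?N \<le> card V"
    using assms(2) closed_nbhd_subset by (rule card_mono)
  ultimately show ?thesis by linarith
qed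

lemma gamma_gr_le:
  assumes "\<And>S. legal_dom_seq V adj S \<Longrightarrow> I_seq V adj S = I \<Longrightarrow> length S \<le> k"
  shows "gamma_gr V adj I \<le> ereal (real k)"
  unfolding gamma_gr_def using assms by (auto intro!: Sup_least)

lemma gamma_gr_eqI:
  assumes "\<And>S. legal_dom_seq V adj S \<Longrightarrow> I_seq V adj S = I \<Longrightarrow> length S \<le> k"
    and "legal_dom_seq V adj S" "I_seq V adj S = I" "length S = k"
  shows "gamma_gr V adj I = ereal (real k)"
proof (rule antisym)
  show "gamma_gr V adj I \<le> ereal (real k)" using assms(1) by (rule gamma_gr_le)
  show "ereal (real k) \<le> gamma_gr V adj I"
    unfolding gamma_gr_def using assms(2-4) by (auto intro!: Sup_upper)
qed

section \<open>Powers of paths\<close>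

definition separated :: "nat \<Rightarrow> nat set \<Rightarrow> bool" where
  "separated m I \<longleftrightarrow> (\<forall>a\<in>I. \<forall>b\<in>I. a < b \<longrightarrow> a + m < b)"

abbreviation path_pow_nbhd :: "nat \<Rightarrow> nat \<Rightarrow> nat \<Rightarrow> nat set" where
  "path_pow_nbhd n m \<equiv> closed_nbhd (path_pow_V n) (path_pow_adj n m)"

abbreviation path_pow_legal :: "nat \<Rightarrow> nat \<Rightarrow> nat list \<Rightarrow> bool" where
  "path_pow_legal n m \<equiv> legal_dom_seq (path_pow_V n) (path_pow_adj n m)"

abbreviation path_pow_footprinter :: "nat \<Rightarrow> nat \<Rightarrow> nat list \<Rightarrow> nat \<Rightarrow> nat" where
  "path_pow_footprinter n m \<equiv> footprinter (path_pow_V n) (path_pow_adj n m)"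

abbreviation path_pow_I_seq :: "nat \<Rightarrow> nat \<Rightarrow> nat list \<Rightarrow> nat set" where
  "path_pow_I_seq n m \<equiv> I_seq (path_pow_V n) (path_pow_adj n m)"

lemma mem_path_pow_nbhd_iff:
  "u \<in> path_pow_nbhd n m v \<longleftrightarrow> u \<in> {1..n} \<and> v \<in> {1..n} \<and> u \<le> v + m \<and> v \<le> u + m"
  by (auto simp: closed_nbhd_def path_pow_V_def path_pow_adj_def split: if_splits)

lemma independent_path_pow_iff:
  "independent (path_pow_V n) (path_pow_adj n m) I \<longleftrightarrow> I \<subseteq> {1..n} \<and> separated m I"
proof -
  have "(\<forall>u\<in>I. \<forall>v\<in>I. \<not> path_pow_adj n m u v) \<longleftrightarrow> separated m I" if "I \<subseteq> {1..n}"
  proof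
    assume "\<forall>u\<in>I. \<forall>v\<in>I. \<not> path_pow_adj n m u v"
    then show "separated m I"
      using that by (fastforce simp: separated_def path_pow_adj_def)
  next
    assume sep: "separated m I"
    show "\<forall>u\<in>I. \<forall>v\<in>I. \<not> path_pow_adj n m u v"
    proof (intro ballI)
      fix u v assume "u \<in> I" "v \<in> I"
      then consider "u + m < v" | "u = v" | "v + m < u"
        using sep unfolding separated_def by (metis linorder_neqE_nat)
      then show "\<not> path_pow_adj n m u v"
        by cases (auto simp: path_pow_adj_def)
    qed
  qed
  then show ?thesis by (auto simp: independent_def path_pow_V_def)
qed

lemma path_pow_I_seq_separated:
  assumes "path_pow_legal n m S"
  shows "separated m (path_pow_I_seq n m S)"
proof -
  have "independent (path_pow_V n) (path_pow_adj n m) (path_pow_I_seq n m S)"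
    using assms by (rule I_seq_independent) (auto simp: path_pow_adj_def)
  then show ?thesis by (simp add: independent_path_pow_iff)
qed

lemma path_pow_I_seq_subset: "path_pow_I_seq n m S \<subseteq> {1..n}"
  by (auto simp: I_seq_def path_pow_V_def)

lemma finite_path_pow_I_seq: "finite (path_pow_I_seq n m S)"
  by (rule finite_subset[OF path_pow_I_seq_subset]) simp

lemma path_pow_footprinter_below_Min:
  assumes legal: "path_pow_legal n m S" and I: "path_pow_I_seq n m S = I" "I \<noteq> {}"
    and "Min I \<le> m + 1" and x: "1 \<le> x" "x < Min I"
  shows "path_pow_footprinter n m S x = Min I"
proof -
  have fin: "finite I" and sub: "I \<subseteq> {1..n}"
    using I(1) finite_path_pow_I_seq[of n m S] path_pow_I_seq_subset[of n m S] by auto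
  have "Min I \<in> I" using fin I(2) by simp
  then have a: "Min I \<in> I" "Min I \<in> {1..n}" "\<forall>c\<in>I. Min I \<le> c"
    using fin sub by auto
  then have "Min I \<in> path_pow_I_seq n m S" using I(1) by simp
  then obtain i where i: "i < length S" "S!i = Min I" "\<forall>j<i. S!j \<noteq> Min I"
    by (rule I_seq_obtains_index[OF legal])
  have "path_pow_footprinter n m S x = S!i"
  proof (rule footprinter_guarded[OF legal, of "{Min I}" "{..<Min I}"])
    fix v y assume "v \<notin> {..<Min I}" "y \<in> {..<Min I}" "y \<in> path_pow_nbhd n m v"
    then show "\<exists>t\<in>{Min I}. t \<in> path_pow_nbhd n m v" using a by (auto simp: mem_path_pow_nbhd_iff)
  qed (use I a i x assms(4) in \<open>auto simp: mem_path_pow_nbhd_iff\<close>)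
  with i show ?thesis by simp
qed

lemma path_pow_footprinter_above_Max:
  assumes legal: "path_pow_legal n m S" and I: "path_pow_I_seq n m S = I" "I \<noteq> {}"
    and "n \<le> Max I + m" and x: "Max I < x" "x \<le> n"
  shows "path_pow_footprinter n m S x = Max I"
proof -
  have fin: "finite I" and sub: "I \<subseteq> {1..n}"
    using I(1) finite_path_pow_I_seq[of n m S] path_pow_I_seq_subset[of n m S] by auto
  have "Max I \<in> I" using fin I(2) by simp
  then have a: "Max I \<in> I" "Max I \<in> {1..n}" "\<forall>c\<in>I. c \<le> Max I"
    using fin sub by auto
  then have "Max I \<in> path_pow_I_seq n m S" using I(1) by simp
  then obtain i where i: "i < length S" "S!i = Max I" "\<forall>j<i. S!j \<noteq> Max I"
    by (rule I_seq_obtains_index[OF legal])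
  have "path_pow_footprinter n m S x = S!i"
  proof (rule footprinter_guarded[OF legal, of "{Max I}" "{Max I<..}"])
    fix v y assume "v \<notin> {Max I<..}" "y \<in> {Max I<..}" "y \<in> path_pow_nbhd n m v"
    then show "\<exists>t\<in>{Max I}. t \<in> path_pow_nbhd n m v" using a by (auto simp: mem_path_pow_nbhd_iff)
  qed (use I a i x assms(4) in \<open>auto simp: mem_path_pow_nbhd_iff\<close>)
  with i show ?thesis by simp
qed

lemma path_pow_footprinter_gap:
  assumes legal: "path_pow_legal n m S"
    and ab: "a \<in> path_pow_I_seq n m S" "b \<in> path_pow_I_seq n m S" "a < b"
    and empty: "{a<..<b} \<inter> path_pow_I_seq n m S = {}"
  shows "(\<forall>x\<in>{a<..a + m}. path_pow_footprinter n m S x = a) \<or>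
         (\<forall>x\<in>{b - m..<b}. path_pow_footprinter n m S x = b)"
proof -
  have sep: "a + m < b" using path_pow_I_seq_separated[OF legal] ab by (auto simp: separated_def)
  have V: "a \<in> {1..n}" "b \<in> {1..n}" using ab path_pow_I_seq_subset[of n m S] by auto
  obtain ia where ia: "ia < length S" "S!ia = a" "\<forall>j<ia. S!j \<noteq> a"
    using ab(1) by (rule I_seq_obtains_index[OF legal])
  obtain ib where ib: "ib < length S" "S!ib = b" "\<forall>j<ib. S!j \<noteq> b"
    using ab(2) by (rule I_seq_obtains_index[OF legal])
  have guarded: "path_pow_footprinter n m S x = S!i"
    if "i < length S" "S!i \<in> {a, b}" "\<forall>j<i. S!j \<notin> {a, b}"
      and "x \<in> {a<..<b}" "x \<in> path_pow_nbhd n m (S!i)"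
    for i x
  proof (rule footprinter_guarded[OF legal, of "{a, b}" "{a<..<b}"])
    fix v y assume "v \<notin> {a<..<b}" "y \<in> {a<..<b}" "y \<in> path_pow_nbhd n m v"
    then show "\<exists>t\<in>{a, b}. t \<in> path_pow_nbhd n m v" using V by (auto simp: mem_path_pow_nbhd_iff)
  qed (use ab empty that in auto)
  have "ia \<noteq> ib" using ia ib ab by auto
  then consider "ia < ib" | "ib < ia" by linarith
  then show ?thesis
  proof cases
    case 1
    have "path_pow_footprinter n m S x = a" if "x \<in> {a<..a + m}" for x
      using guarded[of ia x] 1 ia ib that sep V by (auto simp: mem_path_pow_nbhd_iff)
    then show ?thesis by blast
  next
    case 2
    have "path_pow_footprinter n m S x = b" if "x \<in> {b - m..<b}" for x
      using guarded[of ib x] 2 ia ib that sep V by (auto simp: mem_path_pow_nbhd_iff)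
    then show ?thesis by blast
  qed
qed

lemma card_add_gaps_le_span:
  fixes I B :: "nat set"
  assumes "finite I" "I \<noteq> {}" "B \<subseteq> {Min I..Max I} - I"
    and "\<And>a b. a \<in> I \<Longrightarrow> b \<in> I \<Longrightarrow> a < b \<Longrightarrow> {a<..<b} \<inter> I = {} \<Longrightarrow>
           card (B \<inter> {a<..<b}) + m < b - a"
  shows "card B + card I + (card I - 1) * m \<le> Max I + 1 - Min I"
  using assms
proof (induction I arbitrary: B rule: finite_linorder_max_induct)
  case empty
  then show ?case by simp
next
  case (insert b A)
  show ?case
  proof (cases "A = {}")
    case True
    then show ?thesis using insert.prems(2) by auto
  next
    case False
    define a where "a = Max A"
    have a: "a \<in> A" "a < b" "\<forall>c\<in>A. c \<le> a"
      using insert.hyps(1,2) False by (auto simp: a_def)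
    have "Min A < b" using insert.hyps(1,2) False by simp
    then have Min_eq: "Min (insert b A) = Min A"
      using insert.hyps(1) False by (simp add: Min_insert)
    have Max_eq: "Max (insert b A) = b"
      using insert.hyps(1) False a(2) by (simp add: a_def[symmetric] max_def)
    have Min_le: "Min A \<le> a" using insert.hyps(1) a(1) by simp
    have B_lt: "x < b" if "x \<in> B" for x
      using insert.prems(2) that Max_eq by fastforce
    let ?B1 = "B \<inter> {..a}" and ?B2 = "B \<inter> {a<..<b}"
    have "?B1 \<subseteq> {Min A..Max A} - A"
      using insert.prems(2) Min_eq by (auto simp: a_def[symmetric])
    moreover have "card (?B1 \<inter> {a'<..<b'}) + m < b' - a'"
      if "a' \<in> A" "b' \<in> A" "a' < b'" "{a'<..<b'} \<inter> A = {}" for a' b'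
    proof -
      have "b' < b" using a that(2) by fastforce
      then have "card (B \<inter> {a'<..<b'}) + m < b' - a'"
        using insert.prems(3)[of a' b'] that by auto
      moreover have "card (?B1 \<inter> {a'<..<b'}) \<le> card (B \<inter> {a'<..<b'})"
        by (intro card_mono) auto
      ultimately show ?thesis by linarith
    qed
    ultimately have IH: "card ?B1 + card A + (card A - 1) * m \<le> a + 1 - Min A"
      using insert.IH[of ?B1] False by (simp add: a_def)
    have last_gap: "card ?B2 + m < b - a"
      using insert.prems(3)[of a b] a by fastforce
    have "B = ?B1 \<union> ?B2" using B_lt by fastforce
    then have "card B \<le> card ?B1 + card ?B2"
      by (metis card_Un_le)
    moreover have "card (insert b A) = card A + 1" and "card A \<ge> 1"
      using insert.hyps(1,2) False a(2) by (auto simp: card_gt_0_iff Suc_le_eq)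
    ultimately show ?thesis
      using IH last_gap Min_le Min_eq Max_eq a(2)
      by (simp add: algebra_simps)
  qed
qed

lemma path_pow_length_le_span:
  assumes legal: "path_pow_legal n m S" and I: "path_pow_I_seq n m S = I" "I \<noteq> {}"
    and Min: "Min I \<le> m + 1" and Max: "n \<le> Max I + m"
  shows "length S + (card I - 1) * m \<le> Max I + 1 - Min I"
proof -
  define B where "B = {x \<in> {1..n}. path_pow_footprinter n m S x \<notin> I}"
  have fin: "finite I" using I(1) finite_path_pow_I_seq[of n m S] by simp
  have "length S \<le> card I + card B"
    using length_le_card_I_seq_add[OF legal] I(1) by (simp add: B_def path_pow_V_def)
  moreover have "card B + card I + (card I - 1) * m \<le> Max I + 1 - Min I"
  proof (rule card_add_gaps_le_span[OF fin I(2)])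
    show "B \<subseteq> {Min I..Max I} - I"
    proof
      fix x assume x: "x \<in> B"
      have "Min I \<in> I" "Max I \<in> I" using fin I(2) by simp_all
      then have "\<not> x < Min I" "\<not> Max I < x"
        using x path_pow_footprinter_below_Min[OF legal I Min, of x]
          path_pow_footprinter_above_Max[OF legal I Max, of x] by (auto simp: B_def)
      moreover have "x \<notin> I"
        using x I(1) by (auto simp: B_def I_seq_def)
      ultimately show "x \<in> {Min I..Max I} - I" by simp
    qed
  next
    fix a b assume ab: "a \<in> I" "b \<in> I" "a < b" "{a<..<b} \<inter> I = {}"
    have sep: "a + m < b"
      using path_pow_I_seq_separated[OF legal] ab I(1) by (auto simp: separated_def)
    from path_pow_footprinter_gap[OF legal] ab I(1)
    consider "\<forall>x\<in>{a<..a + m}. path_pow_footprinter n m S x = a"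
      | "\<forall>x\<in>{b - m..<b}. path_pow_footprinter n m S x = b"
      by blast
    then show "card (B \<inter> {a<..<b}) + m < b - a"
    proof cases
      case 1
      then have "B \<inter> {a<..<b} \<subseteq> {a + m<..<b}" using ab by (force simp: B_def)
      from card_mono[OF _ this] show ?thesis using sep by simp
    next
      case 2
      then have "B \<inter> {a<..<b} \<subseteq> {a<..<b - m}" using ab by (force simp: B_def)
      from card_mono[OF _ this] show ?thesis using sep by simp
    qed
  qed
  ultimately show ?thesis by linarith
qed

section \<open>Sequences played in increasing order\<close>

lemma sorted_list_of_set_nth_less_iff:
  fixes X :: "'a::linorder set"
  assumes "finite X" "i < card X" "j < card X"
  shows "sorted_list_of_set X ! j < sorted_list_of_set X ! i \<longleftrightarrow> j < i"
proof -
  let ?S = "sorted_list_of_set X"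
  have sw: "sorted_wrt (<) ?S" and len: "length ?S = card X"
    using assms(1) by (simp_all add: strict_sorted_list_of_set)
  have "j < i \<Longrightarrow> ?S!j < ?S!i"
    using sorted_wrt_nth_less[OF sw] assms(2) len by simp
  moreover have "i \<le> j \<Longrightarrow> ?S!i \<le> ?S!j"
    using sorted_nth_mono[OF sorted_sorted_list_of_set] assms(3) len by simp
  ultimately show ?thesis by (meson leD leI)
qed

lemma sorted_list_of_set_all_before_iff:
  fixes X :: "'a::linorder set"
  assumes "finite X" "i < card X"
  shows "(\<forall>j<i. P (sorted_list_of_set X ! j)) \<longleftrightarrow>
         (\<forall>y\<in>X. y < sorted_list_of_set X ! i \<longrightarrow> P y)"
proof -
  let ?S = "sorted_list_of_set X"
  have setS: "set ?S = X" and len: "length ?S = card X"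
    using assms(1) by simp_all
  have before: "?S!j \<in> X \<and> ?S!j < ?S!i" if "j < i" for j
    using that assms(2) sorted_list_of_set_nth_less_iff[OF assms(1,2), of j]
      nth_mem[of j ?S] setS len
    by simp
  have index: "\<exists>j<i. ?S!j = y" if y: "y \<in> X" "y < ?S!i" for y
  proof -
    obtain j where j: "j < card X" "?S!j = y"
      using y(1) setS len in_set_conv_nth[of y ?S] by auto
    then show ?thesis
      using y(2) sorted_list_of_set_nth_less_iff[OF assms(1,2) j(1)] by auto
  qed
  show ?thesis
  proof
    assume "\<forall>j<i. P (?S!j)"
    then show "\<forall>y\<in>X. y < ?S!i \<longrightarrow> P y" using index by blast
  next
    assume "\<forall>y\<in>X. y < ?S!i \<longrightarrow> P y"
    then show "\<forall>j<i. P (?S!j)" using before by blast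
  qed
qed

lemma finite_obtains_close_predecessor:
  fixes X :: "nat set"
  assumes fin: "finite X" and step: "\<forall>x\<in>X. x < Max X \<longrightarrow> (\<exists>y\<in>X. x < y \<and> y \<le> x + d)"
    and y: "y \<in> X" "y \<noteq> Min X"
  obtains p where "p \<in> X" "p < y" "y \<le> p + d" "\<forall>x\<in>X. x < y \<longrightarrow> x \<le> p"
proof -
  define P where "P = {x \<in> X. x < y}"
  have "Min X \<in> X" "Min X \<le> y" using fin y(1) by (auto intro: Min_in)
  then have "Min X \<in> P" using y(2) by (auto simp: P_def)
  then have "P \<noteq> {}" "finite P" using fin by (auto simp: P_def)
  then have "Max P \<in> P" "\<forall>x\<in>P. x \<le> Max P" by simp_all
  then have p: "Max P \<in> X" "Max P < y" "\<forall>x\<in>X. x < y \<longrightarrow> x \<le> Max P"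
    by (auto simp: P_def)
  have "y \<le> Max X" using fin y(1) by simp
  then obtain s where s: "s \<in> X" "Max P < s" "s \<le> Max P + d"
    using step p(1,2) by fastforce
  then have "y \<le> s" using p(3) by (meson not_le)
  with p s show thesis using that[of "Max P"] by simp
qed

lemma path_pow_dominating:
  fixes X :: "nat set"
  assumes X: "X \<subseteq> {1..n}" "X \<noteq> {}" and ends: "Min X \<le> m + 1" "n \<le> Max X + m"
    and step: "\<forall>x\<in>X. x < Max X \<longrightarrow> (\<exists>y\<in>X. x < y \<and> y \<le> x + (m + 1))"
  shows "dominating (path_pow_V n) (path_pow_adj n m) X"
  unfolding dominating_def
proof (intro conjI ballI)
  have fin: "finite X" by (rule finite_subset[OF X(1)]) simp
  show "X \<subseteq> path_pow_V n" using X(1) by (simp add: path_pow_V_def)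
  fix z assume "z \<in> path_pow_V n"
  then have z: "1 \<le> z" "z \<le> n" by (auto simp: path_pow_V_def)
  define Y where "Y = {y \<in> X. z \<le> y + m}"
  have "Max X \<in> Y" using fin X(2) z ends by (auto simp: Y_def)
  then have "Y \<noteq> {}" "finite Y" using fin by (auto simp: Y_def)
  then have "Min Y \<in> Y" "\<forall>x\<in>Y. Min Y \<le> x" by simp_all
  then have y: "Min Y \<in> X" "z \<le> Min Y + m" "\<forall>x\<in>X. z \<le> x + m \<longrightarrow> Min Y \<le> x"
    by (auto simp: Y_def)
  have "Min Y \<le> z + m"
  proof (cases "Min Y = Min X")
    case True
    then show ?thesis using ends(1) z(1) by simp
  next
    case False
    then obtain p where p: "p \<in> X" "p < Min Y" "Min Y \<le> p + (m + 1)"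
      using finite_obtains_close_predecessor[OF fin step y(1)] by blast
    then have "\<not> z \<le> p + m" using y(3) by (meson leD)
    then show ?thesis using p(3) by linarith
  qed
  then have "z \<in> path_pow_nbhd n m (Min Y)" using y z X(1) by (auto simp: mem_path_pow_nbhd_iff)
  then show "\<exists>d\<in>X. z \<in> path_pow_nbhd n m d" using y(1) by blast
qed

lemma path_pow_legal_sorted_list_of_set:
  fixes X :: "nat set"
  assumes X: "X \<subseteq> {1..n}" "X \<noteq> {}" and ends: "Min X \<le> m + 1" "n \<le> Max X + m"
    and step: "\<forall>x\<in>X. x < Max X \<longrightarrow> (\<exists>y\<in>X. x < y \<and> y \<le> x + (m + 1))"
    and room: "\<forall>x\<in>X. x < Max X \<longrightarrow> x + m < n"
  shows "path_pow_legal n m (sorted_list_of_set X)"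
proof -
  let ?S = "sorted_list_of_set X"
  have fin: "finite X" by (rule finite_subset[OF X(1)]) simp
  have len: "length ?S = card X" using fin by simp
  have SX: "?S!i \<in> X" if "i < card X" for i using that fin len nth_mem[of i ?S] by simp
  have "dominating (path_pow_V n) (path_pow_adj n m) X"
    using X ends step by (rule path_pow_dominating)
  moreover have "PN (path_pow_V n) (path_pow_adj n m) ?S i \<noteq> {}" if i: "i < length ?S" for i
  proof (cases "?S!i = Min X")
    case True
    have "\<forall>y\<in>X. y < ?S!i \<longrightarrow> ?S!i \<notin> path_pow_nbhd n m y" using True fin by (simp add: leD)
    then have "?S!i \<in> PN (path_pow_V n) (path_pow_adj n m) ?S i"
      using sorted_list_of_set_all_before_iff[OF fin, of i "\<lambda>y. ?S!i \<notin> path_pow_nbhd n m y"]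
        SX[of i] i len X(1) by (auto simp: PN_iff mem_path_pow_nbhd_iff)
    then show ?thesis by blast
  next
    case False
    obtain p where p: "p \<in> X" "p < ?S!i" "?S!i \<le> p + (m + 1)" "\<forall>x\<in>X. x < ?S!i \<longrightarrow> x \<le> p"
      using finite_obtains_close_predecessor[OF fin step SX False] i len by auto
    have "?S!i \<le> Max X" using fin SX i len by simp
    then have "p + m < n" using room p(1,2) by simp
    have "\<forall>y\<in>X. y < ?S!i \<longrightarrow> p + m + 1 \<notin> path_pow_nbhd n m y"
      using p(4) by (auto simp: mem_path_pow_nbhd_iff)
    then have "p + m + 1 \<in> PN (path_pow_V n) (path_pow_adj n m) ?S i"
      using sorted_list_of_set_all_before_iff[OF fin, of i "\<lambda>y. p + m + 1 \<notin> path_pow_nbhd n m y"]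
        SX[of i] i len X(1) p(1,2,3) \<open>p + m < n\<close> by (auto simp: PN_iff mem_path_pow_nbhd_iff)
    then show ?thesis by blast
  qed
  ultimately show ?thesis
    using fin by (simp add: legal_dom_seq_def)
qed

lemma path_pow_I_seq_sorted_list_of_set:
  fixes X :: "nat set"
  assumes X: "X \<subseteq> {1..n}" and legal: "path_pow_legal n m (sorted_list_of_set X)"
  shows "path_pow_I_seq n m (sorted_list_of_set X) = {z \<in> X. \<forall>y\<in>X. y < z \<longrightarrow> y + m < z}"
proof (intro set_eqI)
  fix z
  let ?S = "sorted_list_of_set X" and ?P = "\<lambda>y. z \<notin> path_pow_nbhd n m y"
  have fin: "finite X" by (rule finite_subset[OF X(1)]) simp
  have "z \<in> path_pow_I_seq n m ?S \<longleftrightarrow> (\<exists>i<card X. ?S!i = z \<and> (\<forall>j<i. ?P (?S!j)))"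
    using fin by (simp add: I_seq_iff[OF legal])
  also have "\<dots> \<longleftrightarrow> (\<exists>i<card X. ?S!i = z \<and> (\<forall>y\<in>X. y < z \<longrightarrow> ?P y))"
  proof -
    have "(\<forall>j<i. ?P (?S!j)) \<longleftrightarrow> (\<forall>y\<in>X. y < ?S!i \<longrightarrow> ?P y)" if "i < card X" for i
      using sorted_list_of_set_all_before_iff[OF fin that] .
    then show ?thesis by auto
  qed
  also have "\<dots> \<longleftrightarrow> z \<in> X \<and> (\<forall>y\<in>X. y < z \<longrightarrow> ?P y)"
  proof -
    have "(\<exists>i<card X. ?S!i = z) \<longleftrightarrow> z \<in> X"
      using fin in_set_conv_nth[of z ?S] by simp
    then show ?thesis by blast
  qed
  also have "\<dots> \<longleftrightarrow> z \<in> {z \<in> X. \<forall>y\<in>X. y < z \<longrightarrow> y + m < z}"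
    using X by (auto simp: mem_path_pow_nbhd_iff subset_iff)
  finally show "z \<in> path_pow_I_seq n m ?S \<longleftrightarrow> z \<in> {z \<in> X. \<forall>y\<in>X. y < z \<longrightarrow> y + m < z}" .
qed

text \<open>
  Played in increasing order, these vertices form a longest legal sequence S with I_S = I.
\<close>
definition witness_set :: "nat \<Rightarrow> nat set \<Rightarrow> nat set" where
  "witness_set m I = {x \<in> {Min I..Max I}. \<forall>b\<in>I. \<not> (x < b \<and> b \<le> x + m)}"

lemma witness_set_subset: "witness_set m I \<subseteq> {Min I..Max I}"
  by (auto simp: witness_set_def)

lemma subset_witness_set:
  assumes "finite I" "separated m I"
  shows "I \<subseteq> witness_set m I"
  using assms by (fastforce simp: witness_set_def separated_def)

lemma finite_witness_set: "finite (witness_set m I)"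
  by (rule finite_subset[OF witness_set_subset]) simp

lemma Min_witness_set:
  assumes "finite I" "I \<noteq> {}" "separated m I"
  shows "Min (witness_set m I) = Min I"
  using Min_in[OF assms(1,2)] subset_witness_set[OF assms(1,3)] witness_set_subset[of m I]
  by (intro Min_eqI finite_witness_set) auto

lemma Max_witness_set:
  assumes "finite I" "I \<noteq> {}" "separated m I"
  shows "Max (witness_set m I) = Max I"
  using Max_in[OF assms(1,2)] subset_witness_set[OF assms(1,3)] witness_set_subset[of m I]
  by (intro Max_eqI finite_witness_set) auto

lemma witness_set_step:
  assumes "finite I" "I \<noteq> {}" "separated m I" and x: "x \<in> witness_set m I" "x < Max I"
  shows "\<exists>y\<in>witness_set m I. x < y \<and> y \<le> x + (m + 1)"
proof (cases "x + 1 \<in> witness_set m I")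
  case False
  moreover have "Min I \<le> x + 1" "x + 1 \<le> Max I" using x by (auto simp: witness_set_def)
  ultimately obtain b where b: "b \<in> I" "x + 1 < b" "b \<le> x + 1 + m"
    by (auto simp: witness_set_def)
  then have "b = x + (m + 1)" using x(1) by (auto simp: witness_set_def)
  then show ?thesis using b subset_witness_set[OF assms(1,3)] by (intro bexI[of _ b]) auto
qed auto

lemma witness_set_room:
  assumes "finite I" "I \<noteq> {}" and x: "x \<in> witness_set m I" "x < Max I"
  shows "x + m < Max I"
  using Max_in[OF assms(1,2)] x by (auto simp: witness_set_def)

lemma witness_set_leaders:
  assumes "finite I" "I \<noteq> {}" "separated m I" "1 \<le> m"
  shows "{z \<in> witness_set m I. \<forall>y\<in>witness_set m I. y < z \<longrightarrow> y + m < z} = I"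
    (is "{z \<in> ?X. _} = I")
proof (intro set_eqI iffI)
  fix z assume z: "z \<in> {z \<in> ?X. \<forall>y\<in>?X. y < z \<longrightarrow> y + m < z}"
  show "z \<in> I"
  proof (rule ccontr)
    assume "z \<notin> I"
    moreover have "Min I \<in> I" using assms(1,2) by simp
    ultimately have "Min I < z" using z by (fastforce simp: witness_set_def)
    have "z - 1 \<in> ?X"
    proof -
      have "\<not> (z - 1 < b \<and> b \<le> z - 1 + m)" if b: "b \<in> I" for b
      proof
        assume h: "z - 1 < b \<and> b \<le> z - 1 + m"
        then have "b \<noteq> z" using \<open>z \<notin> I\<close> b by auto
        then have "z < b \<and> b \<le> z + m" using h \<open>Min I < z\<close> by auto
        then show False using z b by (auto simp: witness_set_def)
      qed
      then show ?thesis using \<open>Min I < z\<close> z by (auto simp: witness_set_def)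
    qed
    then show False using z \<open>Min I < z\<close> assms(4) by force
  qed
next
  fix z assume "z \<in> I"
  then show "z \<in> {z \<in> ?X. \<forall>y\<in>?X. y < z \<longrightarrow> y + m < z}"
    using subset_witness_set[OF assms(1,3)] by (auto simp: witness_set_def)
qed

lemma card_witness_set:
  assumes fin: "finite I" and "I \<noteq> {}" and sep: "separated m I"
  shows "card (witness_set m I) + (card I - 1) * m = Max I + 1 - Min I"
proof -
  let ?X = "witness_set m I"
  define C where "C = (\<Union>b\<in>I - {Min I}. {b - m..<b})"
  have far: "Min I + m < b" if "b \<in> I - {Min I}" for b
    using that Min_in[OF assms(1,2)] Min_le[OF fin] sep
    by (auto simp: separated_def order.not_eq_order_implies_strict)
  have "{Min I..Max I} - ?X = C"
  proof (intro set_eqI iffI)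
    fix x assume "x \<in> {Min I..Max I} - ?X"
    then obtain b where "b \<in> I" "x < b" "b \<le> x + m" "Min I \<le> x"
      by (auto simp: witness_set_def)
    then show "x \<in> C" unfolding C_def by (intro UN_I[of b]) auto
  next
    fix x assume "x \<in> C"
    then obtain b where b: "b \<in> I - {Min I}" "b - m \<le> x" "x < b" by (auto simp: C_def)
    then show "x \<in> {Min I..Max I} - ?X"
      using far[OF b(1)] Max_ge[OF fin, of b] by (auto simp: witness_set_def)
  qed
  moreover have "card C = (card I - 1) * m"
  proof -
    have "{i - m..<i} \<inter> {j - m..<j} = {}" if "i \<in> I" "j \<in> I" "i < j" for i j
    proof -
      have "i + m < j" using sep that by (simp add: separated_def)
      then show ?thesis by auto
    qed
    then have "card C = (\<Sum>b\<in>I - {Min I}. card {b - m..<b})"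
      unfolding C_def using fin
      by (intro card_UN_disjoint) (auto, metis Int_commute linorder_neqE_nat)
    also have "\<dots> = (\<Sum>b\<in>I - {Min I}. m)"
    proof (rule sum.cong)
      fix b assume "b \<in> I - {Min I}"
      then have "m < b" using far by fastforce
      then show "card {b - m..<b} = m" by simp
    qed simp
    also have "\<dots> = (card I - 1) * m"
      using fin Min_in[OF assms(1,2)] by simp
    finally show ?thesis .
  qed
  moreover have "card ({Min I..Max I} - ?X) = card {Min I..Max I} - card ?X"
    by (rule card_Diff_subset[OF finite_witness_set witness_set_subset])
  moreover have "card ?X \<le> card {Min I..Max I}"
    by (rule card_mono[OF _ witness_set_subset]) simp
  ultimately show ?thesis by simp
qed

lemma path_pow_witness_sequence:
  assumes ne: "I \<noteq> {}" and ind: "independent (path_pow_V n) (path_pow_adj n m) I"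
    and Min: "Min I \<le> m + 1" and Max: "n \<le> Max I + m" and m: "1 \<le> m"
  shows "path_pow_legal n m (sorted_list_of_set (witness_set m I))"
    and "path_pow_I_seq n m (sorted_list_of_set (witness_set m I)) = I"
proof -
  let ?X = "witness_set m I"
  have I: "I \<subseteq> {1..n}" "separated m I" using ind by (simp_all add: independent_path_pow_iff)
  have fin: "finite I" by (rule finite_subset[OF I(1)]) simp
  have "Min I \<in> I" "Max I \<in> I" using fin ne by simp_all
  then have X: "?X \<subseteq> {1..n}" using I(1) witness_set_subset[of m I] by fastforce
  have "?X \<noteq> {}" using subset_witness_set[OF fin I(2)] ne by blast
  show legal: "path_pow_legal n m (sorted_list_of_set ?X)"
  proof (rule path_pow_legal_sorted_list_of_set[OF X \<open>?X \<noteq> {}\<close>])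
    show "Min ?X \<le> m + 1" "n \<le> Max ?X + m"
      using Min Max Min_witness_set[OF fin ne I(2)] Max_witness_set[OF fin ne I(2)] by simp_all
    show "\<forall>x\<in>?X. x < Max ?X \<longrightarrow> (\<exists>y\<in>?X. x < y \<and> y \<le> x + (m + 1))"
      using witness_set_step[OF fin ne I(2)] Max_witness_set[OF fin ne I(2)] by simp
    show "\<forall>x\<in>?X. x < Max ?X \<longrightarrow> x + m < n"
      using witness_set_room[OF fin ne] Max_witness_set[OF fin ne I(2)] \<open>Max I \<in> I\<close> I(1)
      by (fastforce simp: subset_iff)
  qed
  show "path_pow_I_seq n m (sorted_list_of_set ?X) = I"
    using path_pow_I_seq_sorted_list_of_set[OF X legal] witness_set_leaders[OF fin ne I(2) m]
    by simp
qed

lemma gamma_gr_path_pow_span: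
  assumes ne: "I \<noteq> {}" and ind: "independent (path_pow_V n) (path_pow_adj n m) I"
    and Min: "Min I \<le> m + 1" and Max: "n \<le> Max I + m" and m: "1 \<le> m"
  shows "gamma_gr (path_pow_V n) (path_pow_adj n m) I =
           ereal (real (Max I) - real (Min I) + 1 - (real (card I) - 1) * real m)"
proof -
  have I: "I \<subseteq> {1..n}" "separated m I" using ind by (simp_all add: independent_path_pow_iff)
  have fin: "finite I" by (rule finite_subset[OF I(1)]) simp
  have card: "card (witness_set m I) + (card I - 1) * m = Max I + 1 - Min I"
    by (rule card_witness_set[OF fin ne I(2)])
  have "gamma_gr (path_pow_V n) (path_pow_adj n m) I = ereal (real (card (witness_set m I)))"
  proof (rule gamma_gr_eqI)
    fix S assume "path_pow_legal n m S" "path_pow_I_seq n m S = I"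
    then show "length S \<le> card (witness_set m I)"
      using path_pow_length_le_span[OF _ _ ne Min Max] card by fastforce
  next
    show "length (sorted_list_of_set (witness_set m I)) = card (witness_set m I)"
      using finite_witness_set by simp
  qed (use path_pow_witness_sequence[OF assms] in simp_all)
  moreover have "1 \<le> card I" "Min I \<le> Max I"
    using fin ne by (simp_all add: Suc_le_eq card_gt_0_iff)
  then have "card (witness_set m I) + card I * m + Min I = Max I + 1 + m"
    using card by (cases "card I") (auto simp: algebra_simps)
  then have "real (card (witness_set m I)) + real (card I) * real m + real (Min I) =
             real (Max I) + 1 + real m"
    by (metis of_nat_1 of_nat_add of_nat_mult)
  ultimately show ?thesis by (simp add: algebra_simps)
qed

lemma card_path_pow_nbhd_ge:
  assumes "v \<in> {1..n}" "m + 1 \<le> n"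
  shows "m + 1 \<le> card (path_pow_nbhd n m v)"
proof -
  have fin: "finite (path_pow_nbhd n m v)"
    by (rule finite_subset[OF closed_nbhd_subset]) (simp add: path_pow_V_def)
  show ?thesis
  proof (cases "v + m \<le> n")
    case True
    then have "{v..v + m} \<subseteq> path_pow_nbhd n m v" using assms by (auto simp: mem_path_pow_nbhd_iff)
    from card_mono[OF fin this] show ?thesis by simp
  next
    case False
    then have "{n - m..n} \<subseteq> path_pow_nbhd n m v" using assms by (auto simp: mem_path_pow_nbhd_iff)
    from card_mono[OF fin this] show ?thesis using assms(2) by simp
  qed
qed

lemma gamma_gr_path_pow_le:
  assumes "m + 1 \<le> n"
  shows "gamma_gr (path_pow_V n) (path_pow_adj n m) I \<le> ereal (real (n - m))"
proof (rule gamma_gr_le)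
  fix S assume legal: "path_pow_legal n m S"
  show "length S \<le> n - m"
  proof (cases "S = []")
    case False
    then have "S!0 \<in> set S" by simp
    then have "S!0 \<in> {1..n}"
      using legal by (auto simp: legal_dom_seq_def dominating_def path_pow_V_def)
    then have "m + 1 \<le> card (path_pow_nbhd n m (S!0))" using assms by (rule card_path_pow_nbhd_ge)
    moreover have "length S + card (path_pow_nbhd n m (S!0)) \<le> n + 1"
      using length_add_card_first_nbhd_le[OF legal _ False] by (simp add: path_pow_V_def)
    ultimately show ?thesis by linarith
  qed simp
qed

theorem lemma6:
  fixes n m :: nat
  assumes "1 \<le> m" and "m + 2 \<le> n"
  defines "Itilde \<equiv> {I. I \<noteq> {} \<and> independent (path_pow_V n) (path_pow_adj n m) I
                         \<and> Min I \<le> m + 1 \<and> Max I \<ge> n - m}"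
  shows "(\<forall>I\<in>Itilde. gamma_gr (path_pow_V n) (path_pow_adj n m) I =
            ereal (real (Max I) - real (Min I) + 1 - (real (card I) - 1) * real m))
       \<and> (\<forall>I. I \<noteq> {} \<and> independent (path_pow_V n) (path_pow_adj n m) I \<longrightarrow>
            (\<exists>I'\<in>Itilde. gamma_gr (path_pow_V n) (path_pow_adj n m) I
                          \<le> gamma_gr (path_pow_V n) (path_pow_adj n m) I'))"
proof (intro conjI allI impI ballI)
  fix I assume "I \<in> Itilde"
  then have "I \<noteq> {}" "independent (path_pow_V n) (path_pow_adj n m) I"
    "Min I \<le> m + 1" "n \<le> Max I + m"
    by (auto simp: Itilde_def)
  then show "gamma_gr (path_pow_V n) (path_pow_adj n m) I =
               ereal (real (Max I) - real (Min I) + 1 - (real (card I) - 1) * real m)"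
    using assms(1) by (rule gamma_gr_path_pow_span)
next
  fix I
  have ends: "{1, n} \<in> Itilde"
    using assms(2) by (auto simp: Itilde_def independent_path_pow_iff separated_def)
  have "gamma_gr (path_pow_V n) (path_pow_adj n m) {1, n} = ereal (real (n - m))"
    using gamma_gr_path_pow_span[of "{1, n}" n m] ends assms by (auto simp: Itilde_def of_nat_diff)
  moreover have "gamma_gr (path_pow_V n) (path_pow_adj n m) I \<le> ereal (real (n - m))"
    using assms(2) by (intro gamma_gr_path_pow_le) simp
  ultimately show "\<exists>I'\<in>Itilde. gamma_gr (path_pow_V n) (path_pow_adj n m) I
                               \<le> gamma_gr (path_pow_V n) (path_pow_adj n m) I'"
    using ends by metis
qed

end
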